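(* Let $3\le p<\omega$, $0\le n<\omega$, and let $\theta$ be a (square) representation of $\mathfrak L(p,n)$ over a set $D$. Then for all $x\in D$ and all $0\le i\le p$, $$p-1=|\theta(x,a_i)|\ge 2n-1.$$
   Context: For $3\le p<\omega$, $0\le n<\omega$, $\mathfrak L(p,n)$ is the finite symmetric integral relation algebra with atoms $1',a_0,\dots,a_p,t_1,\dots,t_n$ whose composition of atoms is given, for $0\le i,j\le p$, $i\ne j$, $1\le k,l\le n$, $k\ne l$, by: $a_i;a_i=1'+a_i$; $a_i;a_j=0'\cdot\overline{a_i+a_j}$ (where $0'=\overline{1'}$); $a_i;t_k=t_1+\cdots+t_n$; $t_k;t_k=1'+a_0+\cdots+a_p$; $t_k;t_l=a_0+\cdots+a_p$. A square representation over $D$ is an injective map $\theta$ from the algebra into $\mathcal P(D\times D)$ sending $0,1,\overline{\phantom{x}},+,\cdot,1',\breve{\ },;$ to $\emptyset$, $D\times D$, complement in $D\times D$, union, intersection, the identity relation on $D$, relational converse, and relational composition respectively. For $x\in D$ and $a\in\mathfrak L(p,n)$, $\theta(x,a)=\{y\in D:(x,y)\in a^\theta\}$. *)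

theory Defs
  imports Main
begin

text \<open>Atoms of the finite relation algebra L(p,n): the identity 1', a_0..a_p, t_1..t_n.\<close>
datatype atom = One | A nat | T nat

definition atoms :: "nat \<Rightarrow> nat \<Rightarrow> atom set" where
  "atoms p n = {One} \<union> {A i | i. i \<le> p} \<union> {T k | k. 1 \<le> k \<and> k \<le> n}"

definition Aset :: "nat \<Rightarrow> atom set" where
  "Aset p = {A i | i. i \<le> p}"

definition Tset :: "nat \<Rightarrow> atom set" where
  "Tset n = {T k | k. 1 \<le> k \<and> k \<le> n}"

fun atom_comp :: "nat \<Rightarrow> nat \<Rightarrow> atom \<Rightarrow> atom \<Rightarrow> atom set" where
  "atom_comp p n One x = {x}"
| "atom_comp p n x One = {x}"
| "atom_comp p n (A i) (A j) =
     (if i = j then {One, A i} else atoms p n - {One, A i, A j})"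
| "atom_comp p n (A i) (T k) = Tset n"
| "atom_comp p n (T k) (A i) = Tset n"
| "atom_comp p n (T k) (T l) =
     (if k = l then {One} \<union> Aset p else Aset p)"

text \<open>Elements of L(p,n) are the subsets of atoms p n; operations of the algebra.\<close>
definition L_comp :: "nat \<Rightarrow> nat \<Rightarrow> atom set \<Rightarrow> atom set \<Rightarrow> atom set" where
  "L_comp p n X Y = (\<Union>x\<in>X. \<Union>y\<in>Y. atom_comp p n x y)"

definition L_conv :: "atom set \<Rightarrow> atom set" where
  "L_conv X = X"  \<comment> \<open>every atom is self-converse (symmetric algebra)\<close>

definition L_compl :: "nat \<Rightarrow> nat \<Rightarrow> atom set \<Rightarrow> atom set" where
  "L_compl p n X = atoms p n - X"

definition is_square_rep ::
  "nat \<Rightarrow> nat \<Rightarrow> 'd set \<Rightarrow> (atom set \<Rightarrow> ('d \<times> 'd) set) \<Rightarrow> bool" where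
  "is_square_rep p n D \<theta> \<longleftrightarrow>
     inj_on \<theta> (Pow (atoms p n)) \<and>
     (\<forall>X\<in>Pow (atoms p n). \<theta> X \<subseteq> D \<times> D) \<and>
     \<theta> {} = {} \<and>
     \<theta> (atoms p n) = D \<times> D \<and>
     (\<forall>X\<in>Pow (atoms p n). \<theta> (L_compl p n X) = (D \<times> D) - \<theta> X) \<and>
     (\<forall>X\<in>Pow (atoms p n). \<forall>Y\<in>Pow (atoms p n). \<theta> (X \<union> Y) = \<theta> X \<union> \<theta> Y) \<and>
     (\<forall>X\<in>Pow (atoms p n). \<forall>Y\<in>Pow (atoms p n). \<theta> (X \<inter> Y) = \<theta> X \<inter> \<theta> Y) \<and>
     \<theta> {One} = Id_on D \<and>
     (\<forall>X\<in>Pow (atoms p n). \<theta> (L_conv X) = converse (\<theta> X)) \<and>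
     (\<forall>X\<in>Pow (atoms p n). \<forall>Y\<in>Pow (atoms p n). \<theta> (L_comp p n X Y) = \<theta> X O \<theta> Y)"

definition rep_nbhd :: "'d set \<Rightarrow> (atom set \<Rightarrow> ('d \<times> 'd) set) \<Rightarrow> 'd \<Rightarrow> atom set \<Rightarrow> 'd set" where
  "rep_nbhd D \<theta> x a = {y \<in> D. (x, y) \<in> \<theta> a}"

end

theory Submission
  imports Defs
begin

text \<open>The point x together with theta(x, a_i) forms an a_i-clique C, since a_i;a_i = 1' + a_i.
  Choose y with x a_k y for some k \<noteq> i. Each z \<in> C sees y through an atom a_l with l \<noteq> i
  (not through a t-atom, as a_i;t_m only contains t-atoms, and not through a_i, as
  a_i;a_i \<le> 1' + a_i), distinct points of C see y through distinct atoms (as a_l;a_l = 1' + a_l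
  while they are a_i-related), and every a_l with l \<noteq> i occurs (as a_k \<le> a_i;a_l). Hence |C| = p.
  Choosing instead y with x t_1 y, for every m some z \<in> C sees y through t_m (as t_1 \<le> a_i;t_m),
  and then so does a second point of C (as t_m \<le> a_i;t_m); these 2n points are distinct, so
  2n \<le> p.\<close>

lemma atoms_simps [simp]:
  "One \<in> atoms p n" "A i \<in> atoms p n \<longleftrightarrow> i \<le> p" "T k \<in> atoms p n \<longleftrightarrow> 1 \<le> k \<and> k \<le> n"
  by (auto simp: atoms_def)

lemma finite_atoms: "finite (atoms p n)"
proof -
  have "atoms p n = insert One (A ` {..p} \<union> T ` {1..n})"
    by (auto simp: atoms_def)
  then show ?thesis by simp
qed

lemma atom_comp_subset_atoms:
  "a \<in> atoms p n \<Longrightarrow> b \<in> atoms p n \<Longrightarrow> atom_comp p n a b \<subseteq> atoms p n"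
  by (cases a; cases b) (auto simp: Aset_def Tset_def)

locale L_square_rep =
  fixes p n :: nat and D :: "'d set" and \<theta> :: "atom set \<Rightarrow> ('d \<times> 'd) set"
  assumes rep: "is_square_rep p n D \<theta>"
begin

lemma rep_empty: "\<theta> {} = {}"
  and rep_One: "\<theta> {One} = Id_on D"
  and rep_subset_square: "X \<subseteq> atoms p n \<Longrightarrow> \<theta> X \<subseteq> D \<times> D"
  and rep_Un: "X \<subseteq> atoms p n \<Longrightarrow> Y \<subseteq> atoms p n \<Longrightarrow> \<theta> (X \<union> Y) = \<theta> X \<union> \<theta> Y"
  and rep_Int: "X \<subseteq> atoms p n \<Longrightarrow> Y \<subseteq> atoms p n \<Longrightarrow> \<theta> (X \<inter> Y) = \<theta> X \<inter> \<theta> Y"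
  and rep_converse: "X \<subseteq> atoms p n \<Longrightarrow> \<theta> X = converse (\<theta> X)"
  and rep_relcomp: "X \<subseteq> atoms p n \<Longrightarrow> Y \<subseteq> atoms p n \<Longrightarrow> \<theta> (L_comp p n X Y) = \<theta> X O \<theta> Y"
  using rep unfolding is_square_rep_def L_conv_def by auto

lemma rep_eq_UN_atoms: "S \<subseteq> atoms p n \<Longrightarrow> \<theta> S = (\<Union>a\<in>S. \<theta> {a})"
proof (induction S rule: infinite_finite_induct)
  case (infinite S)
  then show ?case using finite_subset[OF _ finite_atoms] by blast
next
  case empty
  then show ?case using rep_empty by simp
next
  case (insert a S)
  then have "\<theta> (insert a S) = \<theta> {a} \<union> \<theta> S"
    using rep_Un[of "{a}" S] by simp
  then show ?case using insert by auto
qed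

lemma rep_atom_in_square: "a \<in> atoms p n \<Longrightarrow> (u, v) \<in> \<theta> {a} \<Longrightarrow> u \<in> D \<and> v \<in> D"
  using rep_subset_square[of "{a}"] by auto

lemma rep_atom_sym: "a \<in> atoms p n \<Longrightarrow> (u, v) \<in> \<theta> {a} \<Longrightarrow> (v, u) \<in> \<theta> {a}"
  using rep_converse[of "{a}"] by auto

lemma rep_atoms_disjoint:
  assumes "a \<in> atoms p n" "b \<in> atoms p n" "(u, v) \<in> \<theta> {a}" "(u, v) \<in> \<theta> {b}"
  shows "a = b"
proof (rule ccontr)
  assume "a \<noteq> b"
  then have "\<theta> {a} \<inter> \<theta> {b} = \<theta> {}"
    using rep_Int[of "{a}" "{b}"] assms(1,2) by simp
  then show False using rep_empty assms(3,4) by auto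
qed

lemma rep_atom_relcomp_iff:
  assumes "a \<in> atoms p n" "b \<in> atoms p n"
  shows "(u, w) \<in> \<theta> {a} O \<theta> {b} \<longleftrightarrow> (\<exists>c\<in>atom_comp p n a b. (u, w) \<in> \<theta> {c})"
proof -
  have "\<theta> {a} O \<theta> {b} = \<theta> (L_comp p n {a} {b})"
    using rep_relcomp[of "{a}" "{b}"] assms by simp
  also have "\<dots> = (\<Union>c\<in>atom_comp p n a b. \<theta> {c})"
    using rep_eq_UN_atoms[OF atom_comp_subset_atoms[OF assms]] by (simp add: L_comp_def)
  finally show ?thesis by blast
qed

lemma rep_atom_compE:
  assumes "a \<in> atoms p n" "b \<in> atoms p n" "(u, v) \<in> \<theta> {a}" "(v, w) \<in> \<theta> {b}"
  obtains c where "c \<in> atom_comp p n a b" "(u, w) \<in> \<theta> {c}"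
  using rep_atom_relcomp_iff[OF assms(1,2)] assms(3,4) by blast

lemma rep_atom_compI:
  assumes "a \<in> atoms p n" "b \<in> atoms p n" "c \<in> atom_comp p n a b" "(u, w) \<in> \<theta> {c}"
  obtains v where "(u, v) \<in> \<theta> {a}" "(v, w) \<in> \<theta> {b}"
  using rep_atom_relcomp_iff[OF assms(1,2)] assms(3,4) by blast

lemma rep_atom_successor_exists:
  assumes "a \<in> atoms p n" "x \<in> D"
  obtains y where "(x, y) \<in> \<theta> {a}"
proof -
  have "One \<in> atom_comp p n a a" by (cases a) auto
  moreover have "(x, x) \<in> \<theta> {One}" using rep_One assms(2) by auto
  ultimately show ?thesis using rep_atom_compI[OF assms(1,1)] that by blast
qed

lemma rep_A_irrefl: "i \<le> p \<Longrightarrow> (u, u) \<notin> \<theta> {A i}"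
  using rep_atoms_disjoint[of One "A i" u u] rep_atom_in_square[of "A i" u u] rep_One by auto

lemma rep_A_trans_or_eq:
  assumes "i \<le> p" "(x, z) \<in> \<theta> {A i}" "(z, w) \<in> \<theta> {A i}"
  shows "w = x \<or> (x, w) \<in> \<theta> {A i}"
  using rep_atom_compE[OF _ _ assms(2,3)] assms(1) rep_One by auto

lemma rep_nbhd_A_iff: "i \<le> p \<Longrightarrow> z \<in> rep_nbhd D \<theta> x {A i} \<longleftrightarrow> (x, z) \<in> \<theta> {A i}"
  unfolding rep_nbhd_def using rep_atom_in_square[of "A i" x z] by auto

lemma closed_nbhd_A_clique:
  assumes "i \<le> p" "z \<in> insert x (rep_nbhd D \<theta> x {A i})" "w \<in> insert x (rep_nbhd D \<theta> x {A i})"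
    "z \<noteq> w"
  shows "(z, w) \<in> \<theta> {A i}"
proof -
  have sym: "(u, v) \<in> \<theta> {A i} \<Longrightarrow> (v, u) \<in> \<theta> {A i}" for u v
    using rep_atom_sym assms(1) by simp
  consider "z = x" | "w = x" | "(x, z) \<in> \<theta> {A i}" "(x, w) \<in> \<theta> {A i}"
    using assms(2,3) rep_nbhd_A_iff[OF assms(1)] by auto
  then show ?thesis
  proof cases
    case 3
    then show ?thesis using rep_A_trans_or_eq[OF assms(1) sym[OF 3(1)] 3(2)] assms(4) by simp
  qed (use assms rep_nbhd_A_iff[OF assms(1)] sym in auto)
qed

lemma closed_nbhd_A_sees_A:
  assumes "i \<le> p" "k \<le> p" "k \<noteq> i" "(x, y) \<in> \<theta> {A k}"
    and "z \<in> insert x (rep_nbhd D \<theta> x {A i})"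
  obtains l where "l \<le> p" "l \<noteq> i" "(z, y) \<in> \<theta> {A l}"
proof (cases "z = x")
  case True
  then show ?thesis using that assms by auto
next
  case False
  then have xz: "(x, z) \<in> \<theta> {A i}" using assms(5) rep_nbhd_A_iff[OF assms(1)] by auto
  obtain c where c: "c \<in> atoms p n - {One, A i, A k}" "(z, y) \<in> \<theta> {c}"
    using rep_atom_compE[OF _ _ rep_atom_sym[OF _ xz] assms(4)] assms(1-3) by auto
  have "c \<notin> Tset n"
  proof
    assume "c \<in> Tset n"
    then have "c \<in> atoms p n" "atom_comp p n (A i) c = Tset n" by (auto simp: Tset_def)
    then obtain c' where "c' \<in> Tset n" "(x, y) \<in> \<theta> {c'}"
      using rep_atom_compE[OF _ _ xz c(2)] assms(1) by auto
    then show False using rep_atoms_disjoint[of c' "A k" x y] assms(2,4) by (auto simp: Tset_def)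
  qed
  then show ?thesis using c that by (cases c) (auto simp: Tset_def)
qed

lemma closed_nbhd_A_sees_A_inj:
  assumes "i \<le> p" "l \<le> p" "l \<noteq> i"
    and "z \<in> insert x (rep_nbhd D \<theta> x {A i})" "w \<in> insert x (rep_nbhd D \<theta> x {A i})"
    and "(z, y) \<in> \<theta> {A l}" "(w, y) \<in> \<theta> {A l}"
  shows "z = w"
proof (rule ccontr)
  assume "z \<noteq> w"
  then have zw: "(z, w) \<in> \<theta> {A i}" using closed_nbhd_A_clique assms by blast
  obtain c where "c \<in> {One, A l}" "(z, w) \<in> \<theta> {c}"
    using rep_atom_compE[OF _ _ assms(6) rep_atom_sym[OF _ assms(7)]] assms(2) by auto
  then show False
    using \<open>z \<noteq> w\<close> rep_One rep_atoms_disjoint[of "A l" "A i" z w] zw assms(1-3) by auto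
qed

lemma closed_nbhd_A_sees_A_surj:
  assumes "i \<le> p" "k \<le> p" "k \<noteq> i" "(x, y) \<in> \<theta> {A k}" "l \<le> p" "l \<noteq> i"
  obtains z where "z \<in> insert x (rep_nbhd D \<theta> x {A i})" "(z, y) \<in> \<theta> {A l}"
proof (cases "l = k")
  case True
  then show ?thesis using that assms(4) by auto
next
  case False
  then have "A k \<in> atom_comp p n (A i) (A l)" using assms by auto
  then obtain z where "(x, z) \<in> \<theta> {A i}" "(z, y) \<in> \<theta> {A l}"
    using rep_atom_compI[of "A i" "A l" "A k" x y] assms(1,4,5) by auto
  then show ?thesis using that rep_nbhd_A_iff[OF assms(1)] by auto
qed

lemma card_closed_nbhd_A:
  assumes "0 < p" "x \<in> D" "i \<le> p"
  shows "finite (insert x (rep_nbhd D \<theta> x {A i}))" "card (insert x (rep_nbhd D \<theta> x {A i})) = p"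
proof -
  define C where "C = insert x (rep_nbhd D \<theta> x {A i})"
  define k where "k = (if i = 0 then 1 else (0::nat))"
  have k: "k \<le> p" "k \<noteq> i" using assms(1) by (auto simp: k_def)
  obtain y where xy: "(x, y) \<in> \<theta> {A k}"
    using rep_atom_successor_exists[of "A k" x] assms(2) k(1) by auto
  have "\<forall>z\<in>C. \<exists>l. l \<le> p \<and> l \<noteq> i \<and> (z, y) \<in> \<theta> {A l}"
    using closed_nbhd_A_sees_A[OF assms(3) k xy] C_def by metis
  then obtain f where f: "\<And>z. z \<in> C \<Longrightarrow> f z \<le> p \<and> f z \<noteq> i \<and> (z, y) \<in> \<theta> {A (f z)}"
    by metis
  have "bij_betw f C ({..p} - {i})"
  proof (rule bij_betw_imageI)
    show "inj_on f C"
      by (rule inj_onI) (use f closed_nbhd_A_sees_A_inj[OF assms(3)] C_def in metis)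
    show "f ` C = {..p} - {i}"
    proof
      show "{..p} - {i} \<subseteq> f ` C"
      proof
        fix l assume l: "l \<in> {..p} - {i}"
        then obtain z where z: "z \<in> C" "(z, y) \<in> \<theta> {A l}"
          using closed_nbhd_A_sees_A_surj[OF assms(3) k xy] C_def by auto
        then have "f z = l" using f[OF z(1)] rep_atoms_disjoint[of "A (f z)" "A l" z y] l by auto
        then show "l \<in> f ` C" using z by auto
      qed
    qed (use f in auto)
  qed
  then show "finite C" "card C = p"
    using bij_betw_finite bij_betw_same_card assms(3) by fastforce+
qed

lemma closed_nbhd_A_sees_T_twice:
  assumes "i \<le> p" "1 \<le> m" "m \<le> n" "(x, y) \<in> \<theta> {T m}" "l \<in> {1..n}"
  obtains z w where "z \<noteq> w" "z \<in> insert x (rep_nbhd D \<theta> x {A i})"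
    "w \<in> insert x (rep_nbhd D \<theta> x {A i})" "(z, y) \<in> \<theta> {T l}" "(w, y) \<in> \<theta> {T l}"
proof -
  have "T m \<in> atom_comp p n (A i) (T l)" "T l \<in> atom_comp p n (A i) (T l)"
    using assms(2,3,5) by (auto simp: Tset_def)
  moreover have "A i \<in> atoms p n" "T l \<in> atoms p n" using assms(1,5) by auto
  ultimately obtain z where z: "(x, z) \<in> \<theta> {A i}" "(z, y) \<in> \<theta> {T l}"
    using rep_atom_compI[of "A i" "T l" "T m" x y] assms(4) by blast
  then obtain w where w: "(z, w) \<in> \<theta> {A i}" "(w, y) \<in> \<theta> {T l}"
    using rep_atom_compI[of "A i" "T l" "T l" z y] \<open>A i \<in> atoms p n\<close> \<open>T l \<in> atoms p n\<close>
      \<open>T l \<in> atom_comp p n (A i) (T l)\<close> by blast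
  have "z \<noteq> w" using w(1) rep_A_irrefl[OF assms(1)] by auto
  moreover have "w = x \<or> (x, w) \<in> \<theta> {A i}" using rep_A_trans_or_eq[OF assms(1) z(1) w(1)] .
  ultimately show ?thesis using that z w rep_nbhd_A_iff[OF assms(1)] by auto
qed

lemma double_n_le_card_closed_nbhd_A:
  assumes "0 < p" "x \<in> D" "i \<le> p"
  shows "2 * n \<le> card (insert x (rep_nbhd D \<theta> x {A i}))"
proof (cases "n = 0")
  case False
  define C where "C = insert x (rep_nbhd D \<theta> x {A i})"
  have fin: "finite C" using card_closed_nbhd_A[OF assms] C_def by simp
  obtain y where xy: "(x, y) \<in> \<theta> {T 1}"
    using rep_atom_successor_exists[of "T 1" x] assms(2) False by auto
  define S where "S l = {z \<in> C. (z, y) \<in> \<theta> {T l}}" for l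
  have "2 \<le> card (S l)" if l: "l \<in> {1..n}" for l
  proof -
    obtain z w where "z \<noteq> w" "z \<in> C" "w \<in> C" "(z, y) \<in> \<theta> {T l}" "(w, y) \<in> \<theta> {T l}"
      by (rule closed_nbhd_A_sees_T_twice[of i 1 x y l]) (use assms(3) xy l False C_def in auto)
    then have "z \<noteq> w" "{z, w} \<subseteq> S l" unfolding S_def by auto
    then show ?thesis
      using card_mono[of "S l" "{z, w}"] fin S_def by auto
  qed
  then have "2 * n \<le> (\<Sum>l\<in>{1..n}. card (S l))"
    using sum_mono[of "{1..n}" "\<lambda>_. 2" "\<lambda>l. card (S l)"] by simp
  also have "\<dots> = card (\<Union>l\<in>{1..n}. S l)"
    by (rule card_UN_disjoint[symmetric])
      (use fin S_def rep_atoms_disjoint[of "T _" "T _"] in auto)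
  also have "\<dots> \<le> card C"
    by (rule card_mono) (use fin S_def in auto)
  finally show ?thesis unfolding C_def .
qed simp

end

theorem lemma6:
  fixes p n :: nat and D :: "'d set" and \<theta> :: "atom set \<Rightarrow> ('d \<times> 'd) set"
  assumes "3 \<le> p"
    and "is_square_rep p n D \<theta>"
    and "x \<in> D" and "i \<le> p"
  shows "card (rep_nbhd D \<theta> x {A i}) = p - 1
       \<and> int p - 1 \<ge> 2 * int n - 1"
proof -
  interpret L_square_rep p n D \<theta> using assms(2) by unfold_locales
  have p: "0 < p" using assms(1) by simp
  have "x \<notin> rep_nbhd D \<theta> x {A i}" using rep_nbhd_A_iff rep_A_irrefl assms(4) by blast
  then have "card (rep_nbhd D \<theta> x {A i}) = p - 1"
    using card_closed_nbhd_A[OF p assms(3,4)] by simp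
  moreover have "2 * n \<le> p"
    using double_n_le_card_closed_nbhd_A[OF p assms(3,4)] card_closed_nbhd_A[OF p assms(3,4)]
    by simp
  ultimately show ?thesis by simp
qed

end
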